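(* For every integer $n\geq 2$, $$\sum_{k=1}^{n}B_{2k}B_{2n-2k}=\frac{1}{n+1}\sum_{k=1}^{n}B_{2k}B_{2n-2k}\binom{2n+2}{2k+2}+2nB_{2n}.$$
   Context: $B_n$ denotes the Bernoulli numbers, defined by $\frac{x}{e^x-1}=\sum_{n\ge 0}B_n\frac{x^n}{n!}$ (so $B_0=1$). *)

theory Defs
  imports Complex_Main "HOL-Computational_Algebra.Formal_Power_Series"
begin

definition bernoulli :: "nat \<Rightarrow> real" where
  "bernoulli n = fact n * fps_nth (fps_X / (fps_exp 1 - 1)) n"

end

theory Submission
  imports Defs
begin

unbundle fps_syntax

text \<open>Let \<open>w\<^sub>N = \<Sum>\<^sub>j B\<^sub>j B\<^sub>N\<^sub>-\<^sub>j\<close> be the ordinary self-convolution of the Bernoulli numbers.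
  Binomial transforms commute with ordinary convolution up to a shift of index (an upper
  Vandermonde identity), and the binomial transform of \<open>B\<close> is \<open>B + \<delta>\<^sub>1\<close>, because
  \<open>e\<^sup>x \<cdot> x/(e\<^sup>x - 1) = x/(e\<^sup>x - 1) + x\<close>. Hence
  \<open>\<Sum>\<^sub>m C(N+1, m+1) w\<^sub>m = w\<^sub>N + 2 B\<^sub>N\<^sub>-\<^sub>1 + [N = 2]\<close>, which says that the integrated
  exponential generating function \<open>P\<close> of \<open>w\<close> satisfies \<open>P (e\<^sup>x - 1) = Q\<close> for an explicit \<open>Q\<close>.
  Multiplying by \<open>x/(e\<^sup>x - 1)\<close> gives \<open>x P = Q x/(e\<^sup>x - 1)\<close>; comparing coefficients yields
  \<open>(N + 2) w\<^sub>N = 2 \<Sum>\<^sub>j C(N+2, j+2) B\<^sub>j B\<^sub>N\<^sub>-\<^sub>j\<close> for even \<open>N \<ge> 4\<close>. For \<open>N = 2n\<close> the odd-index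
  terms vanish, and separating the term \<open>k = 0\<close> gives the theorem.\<close>

definition bernoulli_egf :: "real fps" where
  "bernoulli_egf = fps_X / (fps_exp 1 - 1)"

lemma bernoulli_egf_nth: "bernoulli_egf $ n = bernoulli n / fact n"
  by (simp add: bernoulli_def bernoulli_egf_def)

lemma fps_exp_minus_one_neq_0:
  assumes "c \<noteq> 0"
  shows "fps_exp (c :: 'a :: field_char_0) - 1 \<noteq> 0"
proof
  assume "fps_exp c - 1 = 0"
  then have "(fps_exp c - 1) $ 1 = 0" by simp
  with assms show False by simp
qed

lemma bernoulli_egf_mult_exp: "bernoulli_egf * (fps_exp 1 - 1) = fps_X"
proof -
  have "subdegree (fps_exp (1::real) - 1) \<le> 1"
    by (rule subdegree_leI) simp
  then show ?thesis
    unfolding bernoulli_egf_def by (simp add: fps_times_divide_eq fps_exp_minus_one_neq_0)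
qed

lemma bernoulli_0 [simp]: "bernoulli 0 = 1"
proof -
  have "(bernoulli_egf * (fps_exp 1 - 1)) $ 1 = 1"
    by (simp add: bernoulli_egf_mult_exp)
  then show ?thesis by (simp add: bernoulli_egf_nth)
qed

lemma sum_binomial_bernoulli:
  "(\<Sum>j\<le>n. real (n choose j) * bernoulli j) = bernoulli n + of_bool (n = 1)"
proof -
  have "(bernoulli_egf * fps_exp 1) $ n = (bernoulli_egf + fps_X) $ n"
    using bernoulli_egf_mult_exp by (simp add: algebra_simps)
  then have "(\<Sum>j\<le>n. bernoulli j / fact j / fact (n - j)) = bernoulli n / fact n + of_bool (n = 1)"
    by (simp add: fps_mult_nth bernoulli_egf_nth atLeast0AtMost)
  then have "fact n * (\<Sum>j\<le>n. bernoulli j / fact j / fact (n - j)) = bernoulli n + of_bool (n = 1)"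
    by (simp add: field_simps)
  moreover have "fact n * (\<Sum>j\<le>n. bernoulli j / fact j / fact (n - j)) =
      (\<Sum>j\<le>n. real (n choose j) * bernoulli j)"
    by (simp add: sum_distrib_left binomial_fact)
  ultimately show ?thesis by simp
qed

lemma bernoulli_egf_reflect: "bernoulli_egf oo - fps_X = bernoulli_egf + fps_X"
proof -
  let ?F = bernoulli_egf and ?G = "bernoulli_egf oo - fps_X"
  have reflected: "?G * (fps_exp (-1) - 1) = - fps_X"
    using arg_cong[OF bernoulli_egf_mult_exp, of "\<lambda>A. A oo - fps_X"]
    by (simp add: fps_compose_mult_distrib fps_compose_sub_distrib)
  have "fps_exp (1::real) * fps_exp (-1) = 1"
    by (simp flip: fps_exp_add_mult)
  then have "?G * (fps_exp 1 - 1) = - fps_exp 1 * (?G * (fps_exp (-1) - 1))"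
    by (simp add: algebra_simps)
  also have "\<dots> = fps_exp 1 * fps_X"
    by (simp add: reflected)
  also have "\<dots> = (?F + fps_X) * (fps_exp 1 - 1)"
    using bernoulli_egf_mult_exp by (simp add: algebra_simps)
  finally show ?thesis
    by (simp add: fps_exp_minus_one_neq_0)
qed

lemma bernoulli_odd_eq_0:
  assumes "odd n" "n \<noteq> 1"
  shows "bernoulli n = 0"
proof -
  have "(bernoulli_egf oo - fps_X) $ n = (bernoulli_egf + fps_X) $ n"
    by (simp only: bernoulli_egf_reflect)
  with assms show ?thesis
    by (simp add: fps_compose_uminus' bernoulli_egf_nth)
qed

lemma sum_choose_mult_choose_diff:
  "(\<Sum>a\<le>n. (a choose i) * ((n - a) choose j)) = Suc n choose (i + j + 1)"
proof (induction n arbitrary: j)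
  case 0
  then show ?case by (cases i; cases j) auto
next
  case (Suc n)
  show ?case
  proof (cases j)
    case 0
    then show ?thesis using sum_choose_upper[of i "Suc n"] by simp
  next
    case (Suc j')
    have "(\<Sum>a\<le>Suc n. (a choose i) * ((Suc n - a) choose j))
        = (\<Sum>a\<le>n. (a choose i) * ((n - a) choose j) + (a choose i) * ((n - a) choose j'))"
      by (auto simp: Suc Suc_diff_le algebra_simps intro: sum.cong)
    also have "\<dots> = Suc (Suc n) choose (i + j + 1)"
      by (simp add: sum.distrib Suc.IH Suc)
    finally show ?thesis .
  qed
qed

lemma sum_binomial_atMost_extend:
  fixes w :: "nat \<Rightarrow> 'a :: semiring_1"
  assumes "m \<le> n"
  shows "(\<Sum>j\<le>n. of_nat (m choose j) * w j) = (\<Sum>j\<le>m. of_nat (m choose j) * w j)"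
  using assms by (intro sum.mono_neutral_right) (simp_all add: binomial_eq_0 not_le)

lemma binomial_transform_convolution:
  fixes u v :: "nat \<Rightarrow> 'a :: comm_semiring_1"
  shows "(\<Sum>m\<le>n. of_nat (Suc n choose Suc m) * (\<Sum>j\<le>m. u j * v (m - j))) =
    (\<Sum>a\<le>n. (\<Sum>j\<le>a. of_nat (a choose j) * u j) * (\<Sum>l\<le>n - a. of_nat ((n - a) choose l) * v l))"
proof -
  define g where "g j l = of_nat (Suc n choose (j + l + 1)) * u j * v l" for j l
  have g_eq_0: "g j l = 0" if "n < j + l" for j l
    using that by (simp add: g_def binomial_eq_0 del: binomial_Suc_Suc)
  have "(\<Sum>m\<le>n. of_nat (Suc n choose Suc m) * (\<Sum>j\<le>m. u j * v (m - j))) =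
      (\<Sum>m\<le>n. \<Sum>j\<le>m. g j (m - j))"
    by (auto simp: g_def sum_distrib_left mult_ac simp del: binomial_Suc_Suc intro!: sum.cong)
  also have "\<dots> = (\<Sum>(j, l)\<in>{(j, l). j + l \<le> n}. g j l)"
    by (rule sum.triangle_reindex_eq[symmetric])
  also have "\<dots> = (\<Sum>(j, l)\<in>{..n} \<times> {..n}. g j l)"
    by (intro sum.mono_neutral_left) (auto intro: g_eq_0 simp: not_le[symmetric])
  also have "\<dots> = (\<Sum>j\<le>n. \<Sum>l\<le>n. \<Sum>a\<le>n. of_nat (a choose j) * u j * (of_nat ((n - a) choose l) * v l))"
    unfolding sum.cartesian_product[symmetric]
  proof (intro sum.cong refl)
    fix j l
    have "g j l = (\<Sum>a\<le>n. of_nat (a choose j) * of_nat ((n - a) choose l)) * u j * v l"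
      by (simp only: g_def sum_choose_mult_choose_diff[symmetric] of_nat_sum of_nat_mult)
    then show "g j l = (\<Sum>a\<le>n. of_nat (a choose j) * u j * (of_nat ((n - a) choose l) * v l))"
      by (simp only: sum_distrib_right) (simp only: mult_ac)
  qed
  also have "\<dots> = (\<Sum>a\<le>n. (\<Sum>j\<le>n. of_nat (a choose j) * u j) * (\<Sum>l\<le>n. of_nat ((n - a) choose l) * v l))"
    unfolding sum_product by (rule trans[OF sum.cong[OF refl sum.swap] sum.swap])
  also have "\<dots> = (\<Sum>a\<le>n. (\<Sum>j\<le>a. of_nat (a choose j) * u j) * (\<Sum>l\<le>n - a. of_nat ((n - a) choose l) * v l))"
    by (rule sum.cong[OF refl]) (simp add: sum_binomial_atMost_extend[of _ n])
  finally show ?thesis .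
qed

definition bernoulli_conv :: "nat \<Rightarrow> real" where
  "bernoulli_conv n = (\<Sum>j\<le>n. bernoulli j * bernoulli (n - j))"

lemma binomial_sum_bernoulli_conv:
  "(\<Sum>m\<le>n. real (Suc n choose Suc m) * bernoulli_conv m) =
    bernoulli_conv n + 2 * of_bool (n \<ge> 1) * bernoulli (n - 1) + of_bool (n = 2)"
proof -
  define c where "c j = bernoulli j + of_bool (j = 1)" for j
  have "(\<Sum>m\<le>n. real (Suc n choose Suc m) * bernoulli_conv m) = (\<Sum>a\<le>n. c a * c (n - a))"
    unfolding bernoulli_conv_def binomial_transform_convolution
    by (simp add: sum_binomial_bernoulli c_def)
  also have "\<dots> = bernoulli_conv n + (\<Sum>a\<le>n. if a = 1 then bernoulli (n - 1) else 0)
      + (\<Sum>a\<le>n. if a = n - 1 \<and> n \<ge> 1 then bernoulli a else 0)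
      + (\<Sum>a\<le>n. if a = 1 \<and> n = 2 then 1 else 0)"
    unfolding bernoulli_conv_def sum.distrib[symmetric]
    by (intro sum.cong refl) (auto simp: c_def algebra_simps)
  also have "\<dots> = bernoulli_conv n + 2 * of_bool (n \<ge> 1) * bernoulli (n - 1) + of_bool (n = 2)"
    by (simp add: sum.If_cases)
  finally show ?thesis .
qed

lemma fps_nth_Suc_integral_egf_mult_exp:
  fixes u :: "nat \<Rightarrow> 'a :: field_char_0"
  shows "(Abs_fps (\<lambda>k. if k = 0 then 0 else u (k - 1) / fact k) * fps_exp 1) $ Suc n =
    (\<Sum>m\<le>n. of_nat (Suc n choose Suc m) * u m) / fact (Suc n)"
proof -
  have "(Abs_fps (\<lambda>k. if k = 0 then 0 else u (k - 1) / fact k) * fps_exp 1) $ Suc n =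
      (\<Sum>m\<le>n. u m / (fact (Suc m) * fact (n - m)))"
    unfolding fps_mult_nth by (subst sum.atLeast0_atMost_Suc_shift) (simp add: atLeast0AtMost)
  also have "\<dots> = (\<Sum>m\<le>n. of_nat (Suc n choose Suc m) * u m) / fact (Suc n)"
    unfolding sum_divide_distrib
    by (intro sum.cong refl) (simp add: binomial_fact del: binomial_Suc_Suc fact_Suc)
  finally show ?thesis .
qed

definition bernoulli_conv_integral_egf :: "real fps" where
  "bernoulli_conv_integral_egf = Abs_fps (\<lambda>k. if k = 0 then 0 else bernoulli_conv (k - 1) / fact k)"

lemma bernoulli_conv_integral_egf_mult_exp:
  "bernoulli_conv_integral_egf * (fps_exp 1 - 1) =
    Abs_fps (\<lambda>k. if k < 2 then 0 else 2 * bernoulli (k - 2) / fact k + of_bool (k = 3) / 6)"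
  (is "_ = ?Q")
proof (rule fps_ext)
  fix k
  show "(bernoulli_conv_integral_egf * (fps_exp 1 - 1)) $ k = ?Q $ k"
  proof (cases k)
    case 0
    then show ?thesis by (simp add: bernoulli_conv_integral_egf_def)
  next
    case (Suc m)
    have "(bernoulli_conv_integral_egf * (fps_exp 1 - 1)) $ Suc m =
        (2 * of_bool (m \<ge> 1) * bernoulli (m - 1) + of_bool (m = 2)) / fact (Suc m)"
      unfolding right_diff_distrib fps_sub_nth bernoulli_conv_integral_egf_def
        fps_nth_Suc_integral_egf_mult_exp binomial_sum_bernoulli_conv
      by (simp add: field_simps del: fact_Suc)
    also have "\<dots> = ?Q $ Suc m"
      by (auto simp: numeral_3_eq_3 field_simps)
    finally show ?thesis by (simp add: Suc)
  qed
qed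

lemma bernoulli_conv_eq_binomial_sum:
  assumes "even n" "n \<ge> 4"
  shows "(real n + 2) * bernoulli_conv n =
    2 * (\<Sum>j\<le>n. real ((n + 2) choose (j + 2)) * bernoulli j * bernoulli (n - j))"
proof -
  define Q where
    "Q = Abs_fps (\<lambda>k. if k < 2 then 0 else 2 * bernoulli (k - 2) / fact k + of_bool (k = 3) / 6)"
  have "bernoulli_conv_integral_egf * (fps_exp 1 - 1) = Q"
    unfolding Q_def by (rule bernoulli_conv_integral_egf_mult_exp)
  then have mult_X: "fps_X * bernoulli_conv_integral_egf = Q * bernoulli_egf"
    by (metis bernoulli_egf_mult_exp mult.assoc mult.commute)
  have "bernoulli_conv n / fact (Suc n) = (fps_X * bernoulli_conv_integral_egf) $ Suc (Suc n)"
    by (simp add: bernoulli_conv_integral_egf_def)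
  also have "\<dots> = (Q * bernoulli_egf) $ Suc (Suc n)"
    by (simp only: mult_X)
  also have "\<dots> = (\<Sum>j\<le>n. Q $ Suc (Suc j) * (bernoulli (n - j) / fact (n - j)))"
    unfolding fps_mult_nth
    by (subst sum.atLeast0_atMost_Suc_shift)+
      (simp add: Q_def atLeast0AtMost bernoulli_egf_nth del: sum.atMost_Suc)
  also have "\<dots> = (\<Sum>j\<le>n. 2 * bernoulli j / fact (j + 2) * (bernoulli (n - j) / fact (n - j)))"
    \<comment> \<open>the \<open>x\<^sup>3/6\<close> part of \<open>Q\<close> only meets \<open>B\<^sub>n\<^sub>-\<^sub>1 = 0\<close>\<close>
    using assms by (intro sum.cong refl) (auto simp: Q_def bernoulli_odd_eq_0)
  finally have conv: "bernoulli_conv n / fact (Suc n) =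
      (\<Sum>j\<le>n. 2 * bernoulli j / fact (j + 2) * (bernoulli (n - j) / fact (n - j)))" .
  have "fact (n + 2) = (real n + 2) * fact (Suc n)"
    by (simp add: algebra_simps)
  then have "(real n + 2) * bernoulli_conv n = fact (n + 2) * (bernoulli_conv n / fact (Suc n))"
    by (simp only:) (simp del: fact_Suc)
  also have "\<dots> = 2 * (\<Sum>j\<le>n. real ((n + 2) choose (j + 2)) * bernoulli j * bernoulli (n - j))"
    unfolding conv sum_distrib_left
  proof (intro sum.cong refl)
    fix j
    assume "j \<in> {..n}"
    then have "real ((n + 2) choose (j + 2)) = fact (n + 2) / (fact (j + 2) * fact (n - j))"
      by (simp add: binomial_fact del: binomial_Suc_Suc fact_Suc)
    then show "fact (n + 2) * (2 * bernoulli j / fact (j + 2) * (bernoulli (n - j) / fact (n - j))) =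
        2 * (real ((n + 2) choose (j + 2)) * bernoulli j * bernoulli (n - j))"
      by simp
  qed
  finally show ?thesis .
qed

lemma sum_atMost_double_eq_sum_even:
  fixes g :: "nat \<Rightarrow> 'a :: comm_monoid_add"
  assumes "\<And>j. odd j \<Longrightarrow> g j = 0"
  shows "(\<Sum>j\<le>2 * n. g j) = (\<Sum>k\<le>n. g (2 * k))"
proof -
  have "(\<Sum>j\<le>2 * n. g j) = (\<Sum>j\<le>Suc (2 * n). g j)"
    by (simp add: assms)
  also have "\<dots> = (\<Sum>k\<le>n. g (2 * k))"
    by (simp only: sum.in_pairs_0) (simp add: assms)
  finally show ?thesis .
qed

lemma bernoulli_mult_bernoulli_odd_eq_0:
  assumes "even n" "n \<ge> 4" "odd j"
  shows "bernoulli j * bernoulli (n - j) = 0"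
  using assms by (cases "j = 1") (simp_all add: bernoulli_odd_eq_0)

theorem mainTheorem6:
  fixes n :: nat
  assumes "n \<ge> 2"
  shows "(\<Sum>k=1..n. bernoulli (2*k) * bernoulli (2*n - 2*k)) =
    1 / (real n + 1) * (\<Sum>k=1..n. bernoulli (2*k) * bernoulli (2*n - 2*k) * real ((2*n+2) choose (2*k+2)))
    + 2 * real n * bernoulli (2*n)"
proof -
  define T where "T k = bernoulli (2*k) * bernoulli (2*n - 2*k)" for k
  define C where "C k = real ((2*n+2) choose (2*k+2))" for k
  have odd_terms: "bernoulli j * bernoulli (2*n - j) = 0" if "odd j" for j
    using assms that by (intro bernoulli_mult_bernoulli_odd_eq_0) auto
  have "(real (2*n) + 2) * (\<Sum>k\<le>n. T k) = 2 * (\<Sum>k\<le>n. C k * T k)"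
    using bernoulli_conv_eq_binomial_sum[of "2*n"] assms odd_terms
    by (simp add: bernoulli_conv_def T_def C_def sum_atMost_double_eq_sum_even mult.assoc)
  then have "(\<Sum>k\<le>n. T k) = 1 / (real n + 1) * (\<Sum>k\<le>n. T k * C k)"
    by (simp add: field_simps)
  moreover have "T 0 = bernoulli (2*n)"
    by (simp add: T_def)
  moreover have "(2*n+2) choose 2 = (n+1) * (2*n+1)"
    unfolding choose_two by (simp add: algebra_simps)
  then have "C 0 = (real n + 1) * (2 * real n + 1)"
    unfolding C_def mult_0_right add_0 by (simp add: algebra_simps)
  ultimately show ?thesis
    unfolding T_def[symmetric] C_def[symmetric]
    by (simp add: atMost_atLeast0 sum.atLeast_Suc_atMost field_simps)
qed

end
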